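(* Let $A$ be a $*$-ring with a set of local $*$-units. Then $A$ is von Neumann regular and a locally Rickart $*$-ring if and only if $A$ is von Neumann regular and proper. Likewise, if $A$ is a $\Gamma$-graded $*$-ring with a set of graded local $*$-units, then $A$ is graded von Neumann regular and a graded locally Rickart $*$-ring if and only if $A$ is graded von Neumann regular and graded proper.
   Context: Projection: $p=p^2=p^*$. Local $*$-units: for every finite $F\subseteq A$ a projection $u$ with $ux=xu=x$ for $x\in F$ (homogeneous $u$ in the graded case, where $A=\bigoplus_\gamma A_\gamma$ is $\Gamma$-graded with $A_\gamma^*\subseteq A_{-\gamma}$). Von Neumann regular: for each $x$ there is $y$ with $xyx=x$; graded von Neumann regular: for each homogeneous $x$ there is homogeneous $y$ with $xyx=x$. Rickart $*$-ring: right annihilator of every element generated by a projection; graded Rickart $*$-ring: right annihilator of every homogeneous element generated by a homogeneous projection. Locally (graded) Rickart $*$-ring: $pAp$ is a (graded) Rickart $*$-ring for every (homogeneous) projection $p$. Proper: $xx^*=0\Rightarrow x=0$; graded proper: the same for homogeneous $x$. *)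

theory Defs
  imports Main
begin

definition star_ring :: "('a::ring \<Rightarrow> 'a) \<Rightarrow> bool" where
  "star_ring star \<longleftrightarrow>
     (\<forall>x y. star (x + y) = star x + star y) \<and>
     (\<forall>x y. star (x * y) = star y * star x) \<and>
     (\<forall>x. star (star x) = x)"

definition projection :: "('a::ring \<Rightarrow> 'a) \<Rightarrow> 'a \<Rightarrow> bool" where
  "projection star p \<longleftrightarrow> p * p = p \<and> star p = p"

definition has_local_star_units :: "('a::ring \<Rightarrow> 'a) \<Rightarrow> bool" where
  "has_local_star_units star \<longleftrightarrow>
     (\<forall>F. finite F \<longrightarrow> (\<exists>u. projection star u \<and> (\<forall>x\<in>F. u * x = x \<and> x * u = x)))"

definition von_neumann_regular :: "'a::ring itself \<Rightarrow> bool" where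
  "von_neumann_regular _ \<longleftrightarrow> (\<forall>x::'a. \<exists>y. x * y * x = x)"

definition rickart_on :: "('a::ring \<Rightarrow> 'a) \<Rightarrow> 'a set \<Rightarrow> bool" where
  "rickart_on star S \<longleftrightarrow>
     (\<forall>x\<in>S. \<exists>q\<in>S. projection star q \<and> {y\<in>S. x * y = 0} = {q * y | y. y \<in> S})"

definition corner :: "'a::ring \<Rightarrow> 'a set" where
  "corner p = {p * x * p | x. True}"

definition rickart_star_ring :: "('a::ring \<Rightarrow> 'a) \<Rightarrow> bool" where
  "rickart_star_ring star \<longleftrightarrow> rickart_on star UNIV"

definition locally_rickart :: "('a::ring \<Rightarrow> 'a) \<Rightarrow> bool" where
  "locally_rickart star \<longleftrightarrow> (\<forall>p. projection star p \<longrightarrow> rickart_on star (corner p))"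

definition proper :: "('a::ring \<Rightarrow> 'a) \<Rightarrow> bool" where
  "proper star \<longleftrightarrow> (\<forall>x. x * star x = 0 \<longrightarrow> x = 0)"

text \<open>A \<Gamma>-graded *-ring: A is the internal direct sum of additive subgroups
  Agr \<gamma>, with Agr \<gamma> * Agr \<delta> \<subseteq> Agr (\<gamma>+\<delta>) and star (Agr \<gamma>) \<subseteq> Agr (-\<gamma>).\<close>
definition graded_star_ring :: "('a::ring \<Rightarrow> 'a) \<Rightarrow> ('g::ab_group_add \<Rightarrow> 'a set) \<Rightarrow> bool" where
  "graded_star_ring star Agr \<longleftrightarrow>
     star_ring star \<and>
     (\<forall>\<gamma>. 0 \<in> Agr \<gamma> \<and> (\<forall>x\<in>Agr \<gamma>. \<forall>y\<in>Agr \<gamma>. x + y \<in> Agr \<gamma> \<and> - x \<in> Agr \<gamma>)) \<and>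
     (\<forall>\<gamma> \<delta>. \<forall>x\<in>Agr \<gamma>. \<forall>y\<in>Agr \<delta>. x * y \<in> Agr (\<gamma> + \<delta>)) \<and>
     (\<forall>\<gamma>. \<forall>x\<in>Agr \<gamma>. star x \<in> Agr (- \<gamma>)) \<and>
     (\<forall>x. \<exists>!c::'g \<Rightarrow> 'a. finite {\<gamma>. c \<gamma> \<noteq> 0} \<and> (\<forall>\<gamma>. c \<gamma> \<in> Agr \<gamma>) \<and>
            x = sum c {\<gamma>. c \<gamma> \<noteq> 0})"

definition homogeneous :: "('g \<Rightarrow> 'a set) \<Rightarrow> 'a \<Rightarrow> bool" where
  "homogeneous Agr x \<longleftrightarrow> (\<exists>\<gamma>. x \<in> Agr \<gamma>)"

definition has_graded_local_star_units :: "('a::ring \<Rightarrow> 'a) \<Rightarrow> ('g \<Rightarrow> 'a set) \<Rightarrow> bool" where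
  "has_graded_local_star_units star Agr \<longleftrightarrow>
     (\<forall>F. finite F \<longrightarrow> (\<exists>u. homogeneous Agr u \<and> projection star u \<and>
                              (\<forall>x\<in>F. u * x = x \<and> x * u = x)))"

definition graded_von_neumann_regular :: "('g \<Rightarrow> 'a::ring set) \<Rightarrow> bool" where
  "graded_von_neumann_regular Agr \<longleftrightarrow>
     (\<forall>x. homogeneous Agr x \<longrightarrow> (\<exists>y. homogeneous Agr y \<and> x * y * x = x))"

definition graded_rickart_on :: "('a::ring \<Rightarrow> 'a) \<Rightarrow> 'a set \<Rightarrow> ('g \<Rightarrow> 'a set) \<Rightarrow> bool" where
  "graded_rickart_on star S Sgr \<longleftrightarrow>
     (\<forall>x. homogeneous Sgr x \<longrightarrow>
        (\<exists>q. homogeneous Sgr q \<and> projection star q \<and>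
             {y\<in>S. x * y = 0} = {q * y | y. y \<in> S}))"

definition corner_grading :: "('g \<Rightarrow> 'a::ring set) \<Rightarrow> 'a \<Rightarrow> 'g \<Rightarrow> 'a set" where
  "corner_grading Agr p \<gamma> = {p * x * p | x. x \<in> Agr \<gamma>}"

definition graded_locally_rickart :: "('a::ring \<Rightarrow> 'a) \<Rightarrow> ('g \<Rightarrow> 'a set) \<Rightarrow> bool" where
  "graded_locally_rickart star Agr \<longleftrightarrow>
     (\<forall>p. homogeneous Agr p \<and> projection star p \<longrightarrow>
          graded_rickart_on star (corner p) (corner_grading Agr p))"

definition graded_proper :: "('a::ring \<Rightarrow> 'a) \<Rightarrow> ('g \<Rightarrow> 'a set) \<Rightarrow> bool" where
  "graded_proper star Agr \<longleftrightarrow>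
     (\<forall>x. homogeneous Agr x \<longrightarrow> x * star x = 0 \<longrightarrow> x = 0)"

end

theory Submission
  imports Defs
begin

text \<open>
  If \<open>x x* = 0\<close>, choose a local unit \<open>u\<close> for \<open>x\<close> and \<open>x*\<close>; the Rickart projection \<open>q\<close> of \<open>x\<close>
  in \<open>uAu\<close> satisfies \<open>x q = 0\<close> and \<open>q x* = x*\<close>, whence \<open>x = (q x*)* = x q = 0\<close>.
  Conversely, for \<open>x \<in> pAp\<close> regularity of \<open>e = x x*\<close> gives a self-adjoint \<open>d\<close> with \<open>e d e = e\<close>,
  and properness upgrades this to \<open>e d x = x\<close>, because \<open>w = e d x - x\<close> satisfies \<open>w w* = 0\<close>.
  Then \<open>g = x* d x\<close> is a projection below \<open>p\<close> with the same right annihilator as \<open>x\<close>,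
  so \<open>p - g\<close> generates the right annihilator of \<open>x\<close> in \<open>pAp\<close>.
  In the graded case all these elements are homogeneous: a homogeneous projection \<open>p\<close> of
  degree \<open>\<delta>\<close> equals \<open>p p*\<close> and hence has degree \<open>0\<close>.
\<close>

lemma corner_iff:
  assumes "p * p = p"
  shows "y \<in> corner p \<longleftrightarrow> p * y = y \<and> y * p = y"
proof
  assume "y \<in> corner p"
  then obtain x where "y = p * x * p" by (auto simp: corner_def)
  then show "p * y = y \<and> y * p = y"
    using assms by (metis mult.assoc)
next
  assume "p * y = y \<and> y * p = y"
  then have "y = p * y * p" by simp
  then show "y \<in> corner p" by (auto simp: corner_def)
qed

lemma projection_corner_iff:
  "projection star p \<Longrightarrow> y \<in> corner p \<longleftrightarrow> p * y = y \<and> y * p = y"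
  by (simp add: projection_def corner_iff)

locale involutive_ring =
  fixes star :: "'a::ring \<Rightarrow> 'a"
  assumes star_ring: "star_ring star"
begin

lemma star_add: "star (x + y) = star x + star y"
  and star_mult: "star (x * y) = star y * star x"
  and star_star [simp]: "star (star x) = x"
  using star_ring by (auto simp: star_ring_def)

lemma star_zero [simp]: "star 0 = 0"
  using star_add[of 0 0] by simp

lemma star_uminus: "star (- x) = - star x"
proof -
  have "star (- x) + star x = 0"
    using star_add[of "- x" x] by simp
  then show ?thesis by (simp add: eq_neg_iff_add_eq_0)
qed

lemma star_diff: "star (x - y) = star x - star y"
  using star_add[of x "- y"] by (simp add: star_uminus)

lemma star_mult_star_selfadjoint: "star (x * star x) = x * star x"
  by (simp add: star_mult)

lemma selfadjoint_inner_inverse: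
  assumes e: "star e = e" and inv: "e * a * e = e"
  shows "star (a * e * star a) = a * e * star a" and "e * (a * e * star a) * e = e"
proof -
  show "star (a * e * star a) = a * e * star a"
    using e by (simp add: star_mult mult.assoc)
  have "e * (a * e * star a) * e = e * star a * e"
    using inv by (simp add: mult.assoc[symmetric])
  also have "\<dots> = star (e * a * e)"
    using e by (simp add: star_mult mult.assoc)
  finally show "e * (a * e * star a) * e = e"
    using inv e by simp
qed

lemma inner_inverse_defect:
  assumes d: "star d = d" and inv: "x * star x * d * (x * star x) = x * star x"
  shows "(x * star x * d * x - x) * star (x * star x * d * x - x) = 0"
proof -
  define e where "e = x * star x"
  have "e * d * e = e"
    using inv by (simp add: e_def mult.assoc)
  have star_defect: "star (x * star x * d * x - x) = star x * d * e - star x"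
    using d by (simp add: e_def star_diff star_mult mult.assoc)
  have "(x * star x * d * x - x) * star (x * star x * d * x - x)
      = e * d * e * d * e - e * d * e - e * d * e + e"
    unfolding star_defect by (simp add: e_def algebra_simps)
  also have "\<dots> = 0"
    using \<open>e * d * e = e\<close> by simp
  finally show ?thesis .
qed

lemma proper_inner_inverse:
  assumes "star d = d" and "x * star x * d * (x * star x) = x * star x"
    and "(x * star x * d * x - x) * star (x * star x * d * x - x) = 0
           \<Longrightarrow> x * star x * d * x - x = 0"
  shows "x * star x * d * x = x"
  using assms inner_inverse_defect by simp

lemma range_projection:
  assumes d: "star d = d" and xdx: "x * star x * d * x = x"
  shows "projection star (star x * d * x)" and "x * (star x * d * x) = x"
proof -
  show "x * (star x * d * x) = x"
    using xdx by (simp add: mult.assoc)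
  have "star x * d * x * (star x * d * x) = star x * d * (x * star x * d * x)"
    by (simp add: mult.assoc)
  then show "projection star (star x * d * x)"
    using xdx d by (simp add: projection_def star_mult mult.assoc)
qed

lemma corner_annihilator_complement:
  assumes p: "projection star p" and g: "projection star g" and pg: "p * g = g" "g * p = g"
  shows "projection star (p - g)" and "p - g \<in> corner p"
    and "{y \<in> corner p. g * y = 0} = {(p - g) * y | y. y \<in> corner p}"
proof -
  have pp: "p * p = p" "star p = p" and gg: "g * g = g" "star g = g"
    using p g by (auto simp: projection_def)
  show "projection star (p - g)"
    using pp gg pg by (simp add: projection_def algebra_simps star_diff)
  show "p - g \<in> corner p"
    using pp pg by (simp add: corner_iff algebra_simps)
  show "{y \<in> corner p. g * y = 0} = {(p - g) * y | y. y \<in> corner p}"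
  proof (intro equalityI subsetI)
    fix y assume y: "y \<in> {y \<in> corner p. g * y = 0}"
    then have "(p - g) * y = y"
      using pp by (simp add: corner_iff algebra_simps)
    then show "y \<in> {(p - g) * y | y. y \<in> corner p}"
      using y by (metis (mono_tags, lifting) mem_Collect_eq)
  next
    fix v assume "v \<in> {(p - g) * y | y. y \<in> corner p}"
    then obtain y where v: "v = (p - g) * y" and y: "y * p = y"
      using pp by (auto simp: corner_iff)
    have "p * (p - g) = p - g" "g * (p - g) = 0"
      using pp gg pg by (simp_all add: right_diff_distrib)
    then have "p * v = v" "g * v = 0"
      by (simp_all add: v mult.assoc[symmetric])
    moreover have "v * p = v"
      using y by (simp add: v mult.assoc)
    ultimately show "v \<in> {y \<in> corner p. g * y = 0}"
      using pp by (simp add: corner_iff)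
  qed
qed

lemma corner_rickart_projection:
  assumes p: "projection star p" and x: "x \<in> corner p"
    and d: "star d = d" and xdx: "x * star x * d * x = x"
  defines "q \<equiv> p - star x * d * x"
  shows "q \<in> corner p" and "projection star q"
    and "{y \<in> corner p. x * y = 0} = {q * y | y. y \<in> corner p}"
proof -
  define g where "g = star x * d * x"
  have g: "projection star g" and xg: "x * g = x"
    using range_projection[OF d xdx] by (simp_all add: g_def)
  have px: "p * x = x" "x * p = x"
    using p x by (simp_all add: projection_corner_iff)
  have "star x * p = star x" "p * star x = star x"
    using px p by (metis projection_def star_mult)+
  then have pg: "p * g = g" "g * p = g"
    using px by (simp_all add: g_def mult.assoc[symmetric]) (simp add: mult.assoc)
  note complement = corner_annihilator_complement[OF p g pg]
  show "q \<in> corner p" "projection star q"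
    using complement(1,2) by (simp_all add: q_def g_def)
  have "x * y = 0 \<longleftrightarrow> g * y = 0" for y
    using xg by (metis g_def mult.assoc mult_zero_right)
  then show "{y \<in> corner p. x * y = 0} = {q * y | y. y \<in> corner p}"
    using complement(3) by (simp add: q_def g_def)
qed

lemma zero_if_adjoint_annihilates:
  assumes q: "projection star q" and "q \<in> S" and "star x \<in> S" and "x * star x = 0"
    and ann: "{y \<in> S. x * y = 0} = {q * y | y. y \<in> S}"
  shows "x = 0"
proof -
  have qq: "q * q = q" "star q = q"
    using q by (auto simp: projection_def)
  have "star x \<in> {q * y | y. y \<in> S}"
    using ann assms(3,4) by blast
  then have qx: "q * star x = star x"
    using qq by (auto simp: mult.assoc[symmetric])
  have "q \<in> {q * y | y. y \<in> S}"
    using \<open>q \<in> S\<close> qq by (metis (mono_tags, lifting) mem_Collect_eq)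
  then have "x * q = 0"
    using ann by blast
  have "x = star (q * star x)"
    using qx by simp
  also have "\<dots> = x * q"
    using qq by (simp add: star_mult)
  finally show "x = 0"
    using \<open>x * q = 0\<close> by simp
qed

lemma locally_rickart_imp_proper:
  assumes units: "has_local_star_units star" and rickart: "locally_rickart star"
  shows "proper star"
  unfolding proper_def
proof (intro allI impI)
  fix x assume xx: "x * star x = 0"
  obtain u where u: "projection star u" and unit: "\<forall>y\<in>{x, star x}. u * y = y \<and> y * u = y"
    using units[unfolded has_local_star_units_def, rule_format, of "{x, star x}"] by auto
  then have "x \<in> corner u" "star x \<in> corner u"
    by (simp_all add: projection_corner_iff)
  moreover have "rickart_on star (corner u)"
    using rickart u by (simp add: locally_rickart_def)
  ultimately obtain q where "q \<in> corner u" "projection star q"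
    and "{y \<in> corner u. x * y = 0} = {q * y | y. y \<in> corner u}"
    unfolding rickart_on_def by blast
  then show "x = 0"
    using zero_if_adjoint_annihilates[of q "corner u" x] \<open>star x \<in> corner u\<close> xx by simp
qed

lemma proper_imp_locally_rickart:
  assumes regular: "von_neumann_regular TYPE('a)" and proper: "proper star"
  shows "locally_rickart star"
  unfolding locally_rickart_def rickart_on_def
proof (intro allI impI ballI)
  fix p x assume p: "projection star p" and x: "x \<in> corner p"
  obtain a where "x * star x * a * (x * star x) = x * star x"
    using regular unfolding von_neumann_regular_def by blast
  note inverse = selfadjoint_inner_inverse[OF star_mult_star_selfadjoint this]
  define d where "d = a * (x * star x) * star a"
  have d: "star d = d" and inv: "x * star x * d * (x * star x) = x * star x"
    using inverse by (simp_all only: d_def)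
  have "x * star x * d * x = x"
    using proper_inner_inverse[OF d inv] proper unfolding proper_def by blast
  from corner_rickart_projection[OF p x d this]
  show "\<exists>q\<in>corner p. projection star q \<and> {y \<in> corner p. x * y = 0} = {q * y | y. y \<in> corner p}"
    by blast
qed

end

locale graded_involutive_ring =
  fixes star :: "'a::ring \<Rightarrow> 'a" and Agr :: "'g::ab_group_add \<Rightarrow> 'a set"
  assumes graded: "graded_star_ring star Agr"
begin

sublocale involutive_ring star
  using graded by unfold_locales (simp add: graded_star_ring_def)

lemma grade_add: "x \<in> Agr \<gamma> \<Longrightarrow> y \<in> Agr \<gamma> \<Longrightarrow> x + y \<in> Agr \<gamma>"
  and grade_uminus: "x \<in> Agr \<gamma> \<Longrightarrow> - x \<in> Agr \<gamma>"
  and grade_mult: "x \<in> Agr \<gamma> \<Longrightarrow> y \<in> Agr \<delta> \<Longrightarrow> x * y \<in> Agr (\<gamma> + \<delta>)"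
  and grade_star: "x \<in> Agr \<gamma> \<Longrightarrow> star x \<in> Agr (- \<gamma>)"
  using graded by (auto simp: graded_star_ring_def)

lemma grade_diff: "x \<in> Agr \<gamma> \<Longrightarrow> y \<in> Agr \<gamma> \<Longrightarrow> x - y \<in> Agr \<gamma>"
  using grade_add grade_uminus by (metis diff_conv_add_uminus)

lemma grade_mult_star: "x \<in> Agr \<gamma> \<Longrightarrow> x * star x \<in> Agr 0"
  using grade_mult[OF _ grade_star] by fastforce

lemma homogeneous_projection_grade_zero:
  assumes "homogeneous Agr p" and "projection star p"
  shows "p \<in> Agr 0"
proof -
  have "p = p * star p"
    using assms(2) by (simp add: projection_def)
  then show ?thesis
    using assms(1) grade_mult_star by (metis homogeneous_def)
qed

lemma corner_grading_eq:
  assumes "p \<in> Agr 0" and p: "projection star p"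
  shows "corner_grading Agr p \<gamma> = Agr \<gamma> \<inter> corner p"
proof (intro equalityI subsetI)
  fix y assume "y \<in> corner_grading Agr p \<gamma>"
  then obtain x where y: "y = p * x * p" and "x \<in> Agr \<gamma>"
    by (auto simp: corner_grading_def)
  then have "y \<in> Agr \<gamma>"
    using grade_mult[OF grade_mult[OF \<open>p \<in> Agr 0\<close>]] \<open>p \<in> Agr 0\<close> by fastforce
  then show "y \<in> Agr \<gamma> \<inter> corner p"
    using y by (auto simp: corner_def)
next
  fix y assume "y \<in> Agr \<gamma> \<inter> corner p"
  then have "y \<in> Agr \<gamma>" and "y = p * y * p"
    using p by (simp_all add: projection_corner_iff)
  then show "y \<in> corner_grading Agr p \<gamma>"
    by (auto simp: corner_grading_def)
qed

lemma homogeneous_corner_grading_iff: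
  assumes "homogeneous Agr p" and "projection star p"
  shows "homogeneous (corner_grading Agr p) x \<longleftrightarrow> homogeneous Agr x \<and> x \<in> corner p"
  using corner_grading_eq[OF homogeneous_projection_grade_zero[OF assms] assms(2)]
  by (auto simp: homogeneous_def)

lemma graded_locally_rickart_imp_graded_proper:
  assumes units: "has_graded_local_star_units star Agr"
    and rickart: "graded_locally_rickart star Agr"
  shows "graded_proper star Agr"
  unfolding graded_proper_def
proof (intro allI impI)
  fix x assume x: "homogeneous Agr x" and xx: "x * star x = 0"
  obtain u where u: "homogeneous Agr u" "projection star u"
    and unit: "\<forall>y\<in>{x, star x}. u * y = y \<and> y * u = y"
    using units[unfolded has_graded_local_star_units_def, rule_format, of "{x, star x}"] by auto
  then have "x \<in> corner u" "star x \<in> corner u"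
    by (simp_all add: projection_corner_iff)
  then have "homogeneous (corner_grading Agr u) x"
    using x u by (simp add: homogeneous_corner_grading_iff)
  moreover have "graded_rickart_on star (corner u) (corner_grading Agr u)"
    using rickart u by (simp add: graded_locally_rickart_def)
  ultimately obtain q where "homogeneous (corner_grading Agr u) q" "projection star q"
    and "{y \<in> corner u. x * y = 0} = {q * y | y. y \<in> corner u}"
    unfolding graded_rickart_on_def by blast
  then show "x = 0"
    using zero_if_adjoint_annihilates[of q "corner u" x] \<open>star x \<in> corner u\<close> xx u
    by (simp add: homogeneous_corner_grading_iff)
qed

lemma graded_proper_imp_graded_locally_rickart:
  assumes regular: "graded_von_neumann_regular Agr" and proper: "graded_proper star Agr"
  shows "graded_locally_rickart star Agr"
  unfolding graded_locally_rickart_def graded_rickart_on_def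
proof (intro allI impI)
  fix p x assume p: "homogeneous Agr p \<and> projection star p"
    and "homogeneous (corner_grading Agr p) x"
  then have "x \<in> corner p" and "homogeneous Agr x"
    by (simp_all add: homogeneous_corner_grading_iff)
  then obtain \<gamma> where x: "x \<in> corner p" "x \<in> Agr \<gamma>"
    by (auto simp: homogeneous_def)
  have "homogeneous Agr (x * star x)"
    using grade_mult_star[OF x(2)] by (auto simp: homogeneous_def)
  then obtain a \<epsilon> where a: "a \<in> Agr \<epsilon>" and e: "x * star x * a * (x * star x) = x * star x"
    using regular unfolding graded_von_neumann_regular_def homogeneous_def by blast
  note inverse = selfadjoint_inner_inverse[OF star_mult_star_selfadjoint e]
  define d where "d = a * (x * star x) * star a"
  have d: "star d = d" and inv: "x * star x * d * (x * star x) = x * star x"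
    using inverse by (simp_all only: d_def)
  have "d \<in> Agr 0"
    using grade_mult[OF grade_mult[OF a grade_mult_star[OF x(2)]] grade_star[OF a]]
    by (simp add: d_def)
  then have g: "star x * d * x \<in> Agr 0"
    using grade_mult[OF grade_mult[OF grade_star[OF x(2)]] x(2)] by fastforce
  have "x * (star x * d * x) \<in> Agr \<gamma>"
    using grade_mult[OF x(2) g] by simp
  then have "x * star x * d * x - x \<in> Agr \<gamma>"
    using grade_diff x(2) by (simp add: mult.assoc)
  then have "x * star x * d * x = x"
    using proper_inner_inverse[OF d inv] proper
    unfolding graded_proper_def homogeneous_def by blast
  note witness = corner_rickart_projection[OF conjunct2[OF p] x(1) d this]
  have "p - star x * d * x \<in> Agr 0"
    using grade_diff[OF homogeneous_projection_grade_zero g] p by blast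
  then have "homogeneous Agr (p - star x * d * x)"
    by (auto simp: homogeneous_def)
  then have "homogeneous (corner_grading Agr p) (p - star x * d * x)"
    using witness(1) p by (simp add: homogeneous_corner_grading_iff)
  with witness(2,3)
  show "\<exists>q. homogeneous (corner_grading Agr p) q \<and> projection star q \<and>
          {y \<in> corner p. x * y = 0} = {q * y | y. y \<in> corner p}"
    by blast
qed

end

theorem mainTheorem9:
  fixes star :: "'a::ring \<Rightarrow> 'a" and Agr :: "'g::ab_group_add \<Rightarrow> 'a set"
  shows "(star_ring star \<and> has_local_star_units star \<longrightarrow>
           ((von_neumann_regular TYPE('a) \<and> locally_rickart star) \<longleftrightarrow>
            (von_neumann_regular TYPE('a) \<and> proper star))) \<and>
         (graded_star_ring star Agr \<and> has_graded_local_star_units star Agr \<longrightarrow>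
           ((graded_von_neumann_regular Agr \<and> graded_locally_rickart star Agr) \<longleftrightarrow>
            (graded_von_neumann_regular Agr \<and> graded_proper star Agr)))"
proof (intro conjI impI)
  assume ring: "star_ring star \<and> has_local_star_units star"
  then interpret involutive_ring star
    by unfold_locales blast
  show "(von_neumann_regular TYPE('a) \<and> locally_rickart star) \<longleftrightarrow>
        (von_neumann_regular TYPE('a) \<and> proper star)"
    using locally_rickart_imp_proper proper_imp_locally_rickart ring by blast
next
  assume ring: "graded_star_ring star Agr \<and> has_graded_local_star_units star Agr"
  then interpret graded_involutive_ring star Agr
    by unfold_locales blast
  show "(graded_von_neumann_regular Agr \<and> graded_locally_rickart star Agr) \<longleftrightarrow>
        (graded_von_neumann_regular Agr \<and> graded_proper star Agr)"
    using graded_locally_rickart_imp_graded_proper graded_proper_imp_graded_locally_rickart ring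
    by blast
qed

end
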